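(* $\mathcal{E}_\Lambda$ is non-increasing on average under local operations, for every spectrum $\Lambda$. Precisely: let $\{A_k\}$ be operators on $\mathbb{C}^{d_A}$ with $\sum_k A_k^\dagger A_k=\mathbb{1}$, and set $p_k=\|(A_k\otimes\mathbb{1})|\psi\rangle\|^2$, $|\psi_k\rangle=(A_k\otimes\mathbb{1})|\psi\rangle/\sqrt{p_k}$ (for $p_k>0$). Then $\sum_k p_k\sqrt{F^\Lambda_{\psi_k}}\ge\sqrt{F^\Lambda_\psi}$ and hence $\sum_k p_k\,\mathcal{E}_\Lambda(\psi_k)\le\mathcal{E}_\Lambda(\psi)$. The same holds for operators $\{B_k\}$ on $\mathbb{C}^{d_B}$ with $\sum_kB_k^\dagger B_k=\mathbb{1}$ acting as $\mathbb{1}\otimes B_k$. Consequently $\mathcal{E}_\Lambda$ is a pure-state bipartite entanglement monotone under LOCC.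
   Context: Let $d=d_A\le d_B$ and let $|\psi\rangle\in\mathbb{C}^{d_A}\otimes\mathbb{C}^{d_B}$ be a unit vector. A spectrum is a multiset $\Lambda=\{\lambda_1,\dots,\lambda_d\}$ of unimodular complex numbers. Let $\mathcal{W}_\Lambda$ be the set of unitary matrices on $\mathbb{C}^{d_A}$ whose eigenvalues, counted with multiplicity, are exactly $\Lambda$. Define $F^\Lambda_\psi=\max_{W\in\mathcal{W}_\Lambda}|\langle\psi|(W\otimes \mathbb{1}_B)|\psi\rangle|^2$ and $\mathcal{E}_\Lambda(\psi)=1-F^\Lambda_\psi$. *)

theory Defs
  imports "Jordan_Normal_Form.Char_Poly" "HOL-Library.Multiset"
begin

text \<open>Conventions. A vector of C^{dA} (x) C^{dB} is a complex vec of dimension dA*dB,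
  the basis vector e_i (x) f_j having index i*dB + j (i < dA, j < dB).\<close>

definition adj :: "complex mat \<Rightarrow> complex mat" where
  "adj M = mat (dim_col M) (dim_row M) (\<lambda>(i,j). cnj (M $$ (j,i)))"

definition unitary_mat :: "nat \<Rightarrow> complex mat \<Rightarrow> bool" where
  "unitary_mat n W \<longleftrightarrow> W \<in> carrier_mat n n \<and> adj W * W = 1\<^sub>m n"

definition braket :: "complex vec \<Rightarrow> complex vec \<Rightarrow> complex" where
  "braket u v = (\<Sum>i<dim_vec v. cnj (u $ i) * v $ i)"

definition sqnorm :: "complex vec \<Rightarrow> real" where
  "sqnorm v = (\<Sum>i<dim_vec v. (cmod (v $ i))\<^sup>2)"

text \<open>X (x) 1_B, for X a dA x dA matrix\<close>
definition tensor_id_right :: "nat \<Rightarrow> complex mat \<Rightarrow> complex mat" where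
  "tensor_id_right dB X = mat (dim_row X * dB) (dim_col X * dB)
     (\<lambda>(r,c). if r mod dB = c mod dB then X $$ (r div dB, c div dB) else 0)"

text \<open>1_A (x) Y, for Y a dB x dB matrix\<close>
definition tensor_id_left :: "nat \<Rightarrow> complex mat \<Rightarrow> complex mat" where
  "tensor_id_left dA Y = mat (dA * dim_row Y) (dA * dim_col Y)
     (\<lambda>(r,c). if r div dim_row Y = c div dim_col Y
              then Y $$ (r mod dim_row Y, c mod dim_col Y) else 0)"

definition is_spectrum :: "nat \<Rightarrow> complex multiset \<Rightarrow> bool" where
  "is_spectrum d \<Lambda> \<longleftrightarrow> size \<Lambda> = d \<and> (\<forall>x\<in>#\<Lambda>. cmod x = 1)"

definition W_set :: "nat \<Rightarrow> complex multiset \<Rightarrow> complex mat set" where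
  "W_set d \<Lambda> = {W. unitary_mat d W \<and> char_poly W = (\<Prod>x\<in>#\<Lambda>. [:-x, 1:])}"

text \<open>F^Lambda_psi = max over W in W_Lambda of |<psi|(W (x) 1)|psi>|^2 (the max is attained,
  by compactness, so it equals the supremum)\<close>
definition F_fid :: "nat \<Rightarrow> nat \<Rightarrow> complex multiset \<Rightarrow> complex vec \<Rightarrow> real" where
  "F_fid dA dB \<Lambda> \<psi> =
     (SUP W\<in>W_set dA \<Lambda>. (cmod (braket \<psi> (tensor_id_right dB W *\<^sub>v \<psi>)))\<^sup>2)"

definition E_ent :: "nat \<Rightarrow> nat \<Rightarrow> complex multiset \<Rightarrow> complex vec \<Rightarrow> real" where
  "E_ent dA dB \<Lambda> \<psi> = 1 - F_fid dA dB \<Lambda> \<psi>"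

end

theory Submission
  imports Defs "Jordan_Normal_Form.Spectral_Radius"
begin

text \<open>
  Everything is expressed through the reduced
  density matrix \<open>\<rho>\<^sub>\<psi> = M M\<^sup>\<dagger>\<close>, where \<open>M\<close> is the \<open>d\<^sub>A \<times> d\<^sub>B\<close> coefficient matrix of \<open>\<psi>\<close>:
  \<open>\<langle>\<psi>|(W \<otimes> 1)|\<psi>\<rangle> = tr (W \<rho>\<^sub>\<psi>)\<close>, so \<open>F\<^sup>\<Lambda>\<^sub>\<psi> = sup\<^sub>W\<^sub>\<in>\<^sub>W\<^sub>\<Lambda> |tr (W \<rho>\<^sub>\<psi>)|\<^sup>2\<close>.

  The key observation (lemma \<open>monotone_under_decomposition\<close>) is: if for all \<open>W\<close>
  \<open>tr (W \<rho>\<^sub>\<psi>) = \<Sum>\<^sub>k tr (Q\<^sub>k W Q\<^sub>k\<^sup>\<dagger> \<rho>\<^sub>k)\<close> with unitaries \<open>Q\<^sub>k\<close> and \<open>\<rho>\<^sub>k\<close> the reduced states of the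
  unnormalized branches, then \<open>\<surd>F(\<psi>) \<le> \<Sum>\<^sub>k p\<^sub>k \<surd>F(\<psi>\<^sub>k)\<close>, because \<open>W\<^sub>\<Lambda>\<close> is invariant under unitary
  conjugation; the bound on \<open>\<E>\<^sub>\<Lambda>\<close> then follows from an elementary inequality.  For Bob's
  operations such a decomposition holds with \<open>Q\<^sub>k = 1\<close>.  For Alice's operations we write
  \<open>\<rho>\<^sub>\<psi> = R\<^sup>2\<close> with \<open>R\<close> Hermitian and use that \<open>C\<^sup>\<dagger>C\<close> and \<open>C C\<^sup>\<dagger>\<close> are unitarily similar, both
  consequences of the singular value decomposition, which is therefore developed first,
  together with the needed facts about adjoints, unitaries and traces.
\<close>

text \<open>A sum over \<open>{..<a*b}\<close> as a double sum over pair indices \<open>i*b + j\<close>; this is how vectors of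
  \<open>\<complex>\<^sup>d\<^sup>\<^sub>A \<otimes> \<complex>\<^sup>d\<^sup>\<^sub>B\<close> are related to their coefficient matrices.\<close>
lemma sum_mult_split:
  "(\<Sum>r<a*b. f r) = (\<Sum>i<a. \<Sum>j<b. (f::nat \<Rightarrow> 'a::comm_monoid_add) (i*b + j))"
proof (induction a)
  case (Suc a)
  have split: "{..<Suc a * b} = {..<a*b} \<union> (\<lambda>j. a*b + j) ` {..<b}"
  proof -
    have "r \<in> (\<lambda>j. a*b + j) ` {..<b}" if "r < Suc a * b" "\<not> r < a*b" for r
      using that by (intro image_eqI[of _ _ "r - a*b"]) auto
    then show ?thesis by auto
  qed
  have "(\<Sum>r<Suc a * b. f r) = (\<Sum>r<a*b. f r) + (\<Sum>r\<in>(\<lambda>j. a*b + j) ` {..<b}. f r)"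
    unfolding split by (rule sum.union_disjoint) auto
  also have "(\<Sum>r\<in>(\<lambda>j. a*b + j) ` {..<b}. f r) = (\<Sum>j<b. f (a*b + j))"
    by (subst sum.reindex) (auto simp: inj_on_def)
  finally show ?case using Suc by simp
qed simp

text \<open>Associativity of matrix products with dimension side conditions only; as a rewrite rule it
  lets the simplifier normalize products of matrices of known sizes to right-nested form.\<close>
lemma mult_assoc_dims:
  "dim_col A = dim_row B \<Longrightarrow> dim_col B = dim_row C \<Longrightarrow> A * B * C = A * (B * C)"
  by (rule assoc_mult_mat[of A "dim_row A" "dim_col A" B "dim_col B" C "dim_col C"]) auto

lemma mult_mat_index:
  "A \<in> carrier_mat n m \<Longrightarrow> B \<in> carrier_mat m p \<Longrightarrow> i < n \<Longrightarrow> j < p \<Longrightarrow>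
   (A * B) $$ (i,j) = (\<Sum>k<m. A $$ (i,k) * B $$ (k,j))"
  by (auto simp: scalar_prod_def atLeast0LessThan intro!: sum.cong)

lemma adj_carrier[simp]: "A \<in> carrier_mat n m \<Longrightarrow> adj A \<in> carrier_mat m n"
  unfolding adj_def by auto

lemma adj_dims[simp]: "dim_row (adj A) = dim_col A" "dim_col (adj A) = dim_row A"
  unfolding adj_def by auto

lemma adj_index[simp]: "i < dim_col A \<Longrightarrow> j < dim_row A \<Longrightarrow> adj A $$ (i,j) = cnj (A $$ (j,i))"
  unfolding adj_def by auto

lemma adj_adj[simp]: "adj (adj A) = A"
  by (rule eq_matI) (auto simp: adj_def)

lemma adj_one[simp]: "adj (1\<^sub>m n) = 1\<^sub>m n"
  by (rule eq_matI) (auto simp: adj_def)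

lemma adj_mult_carrier:
  assumes A: "A \<in> carrier_mat n m" and B: "B \<in> carrier_mat m p"
  shows "adj (A * B) = adj B * adj A"
proof (rule eq_matI)
  fix i j assume "i < dim_row (adj B * adj A)" "j < dim_col (adj B * adj A)"
  then have i: "i < p" and j: "j < n" using A B by auto
  show "adj (A * B) $$ (i, j) = (adj B * adj A) $$ (i, j)"
    using i j A B by (simp add: mult_mat_index[OF adj_carrier[OF B] adj_carrier[OF A]]
        mult_mat_index[OF A B] mult.commute del: index_mult_mat(1))
qed (use A B in auto)

lemma adj_mult: "dim_col A = dim_row B \<Longrightarrow> adj (A * B) = adj B * adj A"
  by (rule adj_mult_carrier[of A "dim_row A" "dim_col A" B "dim_col B"]) auto

text \<open>Unitary matrices form a group under multiplication, closed under \<open>(\<cdot>)\<^sup>\<dagger>\<close>; the cancellation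
  laws are stated for right-nested products, matching the normal form produced by \<open>mult_assoc_dims\<close>.\<close>
lemma unitary_carrier: "unitary_mat n U \<Longrightarrow> U \<in> carrier_mat n n"
  unfolding unitary_mat_def by auto

lemma unitary_adj_left: "unitary_mat n U \<Longrightarrow> adj U * U = 1\<^sub>m n"
  unfolding unitary_mat_def by auto

lemma unitary_adj_right: "unitary_mat n U \<Longrightarrow> U * adj U = 1\<^sub>m n"
  unfolding unitary_mat_def using mat_mult_left_right_inverse[of "adj U" n U] by auto

lemma unitary_cancel_left: "unitary_mat n U \<Longrightarrow> dim_row X = n \<Longrightarrow> adj U * (U * X) = X"
  using unitary_adj_left[of n U] unitary_carrier[of n U]
  by (simp flip: mult_assoc_dims)

lemma unitary_cancel_right: "unitary_mat n U \<Longrightarrow> dim_row X = n \<Longrightarrow> U * (adj U * X) = X"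
  using unitary_adj_right[of n U] unitary_carrier[of n U]
  by (simp flip: mult_assoc_dims)

lemma unitary_adj: "unitary_mat n U \<Longrightarrow> unitary_mat n (adj U)"
  using unitary_adj_right[of n U] unitary_carrier[of n U] unfolding unitary_mat_def by auto

lemma unitary_one: "unitary_mat n (1\<^sub>m n)"
  unfolding unitary_mat_def by auto

lemma unitary_mult:
  assumes U: "unitary_mat n U" and V: "unitary_mat n V" shows "unitary_mat n (U * V)"
  using unitary_carrier[OF U] unitary_carrier[OF V] unitary_cancel_left[OF U] unitary_adj_left[OF V]
  unfolding unitary_mat_def by (simp add: adj_mult mult_assoc_dims)

definition tr :: "complex mat \<Rightarrow> complex" where
  "tr X = (\<Sum>i<dim_row X. X $$ (i,i))"

lemma tr_mult:
  "A \<in> carrier_mat n m \<Longrightarrow> B \<in> carrier_mat m n \<Longrightarrow> tr (A * B) = (\<Sum>i<n. \<Sum>k<m. A $$ (i,k) * B $$ (k,i))"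
  unfolding tr_def by (auto simp: mult_mat_index simp del: index_mult_mat(1) intro!: sum.cong)

lemma tr_comm: "A \<in> carrier_mat n m \<Longrightarrow> B \<in> carrier_mat m n \<Longrightarrow> tr (A * B) = tr (B * A)"
  by (simp add: tr_mult[of A n m B] tr_mult[of B m n A] mult.commute sum.swap[of _ "{..<n}"])

lemma tr_smult: "W \<in> carrier_mat n n \<Longrightarrow> X \<in> carrier_mat n n \<Longrightarrow> tr (W * (a \<cdot>\<^sub>m X)) = a * tr (W * X)"
  by (simp add: tr_mult[of _ n n] sum_distrib_left mult_ac)

lemma tr_congruence:
  assumes W: "W \<in> carrier_mat n n" and X: "X \<in> carrier_mat n m" and Y: "Y \<in> carrier_mat m m"
  shows "tr (W * (X * Y * adj X)) = tr ((adj X * W * X) * Y)"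
proof -
  have "tr (W * (X * Y * adj X)) = tr ((W * X * Y) * adj X)"
    using W X Y by (simp add: mult_assoc_dims)
  also have "\<dots> = tr (adj X * (W * X * Y))"
    using W X Y by (intro tr_comm[of _ n m]) auto
  finally show ?thesis using W X Y by (simp add: mult_assoc_dims)
qed

lemma tr_resolution:
  assumes Z: "Z \<in> carrier_mat m m" and Y: "\<And>k. k \<in> K \<Longrightarrow> Y k \<in> carrier_mat m m"
    and one: "\<And>c d. c < m \<Longrightarrow> d < m \<Longrightarrow> (\<Sum>k\<in>K. Y k $$ (c,d)) = 1\<^sub>m m $$ (c,d)"
  shows "(\<Sum>k\<in>K. tr (Z * Y k)) = tr Z"
proof -
  have "(\<Sum>k\<in>K. tr (Z * Y k)) = (\<Sum>k\<in>K. \<Sum>i<m. \<Sum>c<m. Z $$ (i,c) * Y k $$ (c,i))"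
    by (intro sum.cong refl) (simp add: tr_mult[OF Z Y])
  also have "\<dots> = (\<Sum>i<m. \<Sum>c<m. Z $$ (i,c) * (\<Sum>k\<in>K. Y k $$ (c,i)))"
    by (simp add: sum.swap[of _ K] sum_distrib_left)
  also have "\<dots> = (\<Sum>i<m. Z $$ (i,i))"
    by (intro sum.cong refl) (simp add: one if_distrib sum.delta' cong: if_cong)
  finally show ?thesis unfolding tr_def using Z by simp
qed

lemma complex_of_sqnorm: "complex_of_real (sqnorm v) = (\<Sum>i<dim_vec v. v $ i * cnj (v $ i))"
  unfolding sqnorm_def of_real_sum by (rule sum.cong[OF refl]) (rule complex_norm_square)

lemma sqnorm_nonneg: "sqnorm v \<ge> 0"
  unfolding sqnorm_def by (auto intro: sum_nonneg)

lemma sqnorm_eq_0: assumes "v \<in> carrier_vec n" shows "sqnorm v = 0 \<longleftrightarrow> v = 0\<^sub>v n"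
proof
  assume "sqnorm v = 0"
  then have "\<forall>i\<in>{..<dim_vec v}. (cmod (v $ i))\<^sup>2 = 0"
    unfolding sqnorm_def by (subst sum_nonneg_eq_0_iff[symmetric]) auto
  then show "v = 0\<^sub>v n" using assms by (intro eq_vecI) auto
qed (simp add: sqnorm_def)

lemma sqnorm_smult: "sqnorm (c \<cdot>\<^sub>v v) = (cmod c)\<^sup>2 * sqnorm v"
  unfolding sqnorm_def by (simp add: sum_distrib_left norm_mult power_mult_distrib)

definition normalized :: "complex vec \<Rightarrow> complex vec" where
  "normalized v = (1 / complex_of_real (sqrt (sqnorm v))) \<cdot>\<^sub>v v"

lemma normalized_carrier[simp]: "v \<in> carrier_vec n \<Longrightarrow> normalized v \<in> carrier_vec n"
  unfolding normalized_def by simp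

lemma sqnorm_normalized: assumes "sqnorm v > 0" shows "sqnorm (normalized v) = 1"
  using assms unfolding normalized_def sqnorm_smult by (simp add: norm_divide power_divide)

lemma normalized_scale: assumes "sqnorm v > 0"
  shows "complex_of_real (sqrt (sqnorm v)) \<cdot>\<^sub>v normalized v = v"
  using assms unfolding normalized_def by (simp add: smult_smult_assoc)

lemma unitary_with_first_column:
  assumes v: "v \<in> carrier_vec n" and nv: "sqnorm v = 1"
  shows "\<exists>U. unitary_mat n U \<and> (\<forall>i<n. U $$ (i,0) = v $ i)"
proof -
  have v0: "v \<noteq> 0\<^sub>v n" using nv sqnorm_eq_0[OF v] by auto
  then have n0: "n > 0" using v by (cases n) auto
  interpret cof_vec_space n "TYPE(complex)" .
  define b where "b = basis_completion v"
  from basis_completion[OF v v0, folded b_def]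
  have dist_b: "distinct b" and indep: "\<not> lin_dep (set b)" and bc: "set b \<subseteq> carrier_vec n"
    and hdb: "hd b = v" and len_b: "length b = n" by auto
  define ws where "ws = gram_schmidt n b"
  from gram_schmidt_result[OF bc dist_b indep refl, folded ws_def]
  have wsc: "set ws \<subseteq> carrier_vec n" and orth: "corthogonal ws" and lws: "length ws = n"
    by (auto simp: len_b)
  obtain vs where bv: "b = v # vs" using hdb len_b n0 by (cases b) auto
  have "hd ws = v" unfolding ws_def bv using gram_schmidt_hd[OF v] by simp
  then have ws0: "ws ! 0 = v" using lws n0 by (cases ws) auto
  have dimw: "\<And>j. j < n \<Longrightarrow> ws ! j \<in> carrier_vec n" using wsc lws by (auto simp: set_conv_nth)
  have sp: "ws ! j \<bullet>c ws ! i = (\<Sum>r<n. ws ! j $ r * cnj (ws ! i $ r))" if "i < n" "j < n" for i j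
    using dimw[OF that(1)] by (simp add: scalar_prod_def atLeast0LessThan)
  have ws_pos: "sqnorm (ws ! j) > 0" if j: "j < n" for j
  proof -
    have "ws ! j \<noteq> 0\<^sub>v n" using corthogonalD[OF orth, of j j] j lws dimw[OF j] by auto
    then show ?thesis using sqnorm_eq_0[OF dimw[OF j]] sqnorm_nonneg[of "ws ! j"] by linarith
  qed
  define c where "c = (\<lambda>j. 1 / complex_of_real (sqrt (sqnorm (ws ! j))))"
  define U where "U = mat n n (\<lambda>(i,j). c j * ws ! j $ i)"
  have Uc: "U \<in> carrier_mat n n" unfolding U_def by auto
  have "adj U * U = 1\<^sub>m n"
  proof (rule eq_matI)
    fix i j assume "i < dim_row (1\<^sub>m n)" "j < dim_col (1\<^sub>m n)"
    then have i: "i < n" and j: "j < n" by auto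
    have "(adj U * U) $$ (i,j) = (\<Sum>r<n. cnj (c i * ws ! i $ r) * (c j * ws ! j $ r))"
      using i j Uc by (simp add: mult_mat_index[of _ n n _ n] U_def del: index_mult_mat(1))
    also have "\<dots> = cnj (c i) * c j * (ws ! j \<bullet>c ws ! i)"
      by (simp add: sp i j sum_distrib_left mult_ac)
    also have "\<dots> = 1\<^sub>m n $$ (i,j)"
    proof (cases "i = j")
      case True
      have "ws ! i \<bullet>c ws ! i = complex_of_real (sqnorm (ws ! i))"
        using dimw[OF i] by (simp add: sp i complex_of_sqnorm)
      moreover have "cnj (c i) * c i = complex_of_real (1 / sqnorm (ws ! i))"
        using ws_pos[OF i] unfolding c_def by (simp add: field_simps flip: of_real_mult)
      ultimately show ?thesis using True i ws_pos[OF i] by (simp flip: of_real_mult)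
    next
      case False
      then show ?thesis using corthogonalD[OF orth, of j i] i j lws by auto
    qed
    finally show "(adj U * U) $$ (i,j) = 1\<^sub>m n $$ (i,j)" .
  qed (use Uc in auto)
  then have "unitary_mat n U" using Uc unfolding unitary_mat_def by auto
  moreover have "\<forall>i<n. U $$ (i,0) = v $ i" using n0 nv ws0 by (auto simp: U_def c_def)
  ultimately show ?thesis by blast
qed

lemma unit_eigenvector:
  assumes H: "H \<in> carrier_mat n n" and n: "n > 0"
  shows "\<exists>w \<mu>. w \<in> carrier_vec n \<and> sqnorm w = 1 \<and> H *\<^sub>v w = \<mu> \<cdot>\<^sub>v w"
proof -
  obtain \<mu> where "\<mu> \<in> spectrum H" using spectrum_non_empty[OF H n] by auto
  then obtain v where "eigenvector H v \<mu>" unfolding spectrum_def eigenvalue_def by auto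
  then have v: "v \<in> carrier_vec n" "v \<noteq> 0\<^sub>v n" and Hv: "H *\<^sub>v v = \<mu> \<cdot>\<^sub>v v"
    using H unfolding eigenvector_def by auto
  have pos: "sqnorm v > 0" using v sqnorm_eq_0 sqnorm_nonneg[of v] by (metis order_less_le)
  have "H *\<^sub>v normalized v = \<mu> \<cdot>\<^sub>v normalized v"
    using mult_mat_vec[OF H v(1)] Hv unfolding normalized_def by (simp add: smult_smult_assoc mult.commute)
  then show ?thesis using v(1) sqnorm_normalized[OF pos] normalized_carrier by blast
qed

lemma singular_pair_of_eigenvector:
  assumes X: "X \<in> carrier_mat n m" and v: "v \<in> carrier_vec m"
    and ev: "(adj X * X) *\<^sub>v v = \<nu> \<cdot>\<^sub>v v" and Xv: "X *\<^sub>v v \<noteq> 0\<^sub>v n"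
  shows "\<exists>w a b. w \<in> carrier_vec n \<and> sqnorm w = 1 \<and> X *\<^sub>v v = a \<cdot>\<^sub>v w \<and> adj X *\<^sub>v w = b \<cdot>\<^sub>v v"
proof -
  define s where "s = complex_of_real (sqrt (sqnorm (X *\<^sub>v v)))"
  have t: "X *\<^sub>v v \<in> carrier_vec n" using X v by simp
  have pos: "sqnorm (X *\<^sub>v v) > 0" using Xv sqnorm_eq_0[OF t] sqnorm_nonneg by (metis order_less_le)
  have Xw: "X *\<^sub>v v = s \<cdot>\<^sub>v normalized (X *\<^sub>v v)" unfolding s_def using normalized_scale[OF pos] ..
  have "adj X *\<^sub>v normalized (X *\<^sub>v v) = (1 / s) \<cdot>\<^sub>v (adj X *\<^sub>v (X *\<^sub>v v))"
    unfolding normalized_def s_def using mult_mat_vec[OF adj_carrier[OF X] t] .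
  also have "adj X *\<^sub>v (X *\<^sub>v v) = \<nu> \<cdot>\<^sub>v v"
    using ev assoc_mult_mat_vec[OF adj_carrier[OF X] X v] by simp
  also have "(1 / s) \<cdot>\<^sub>v (\<nu> \<cdot>\<^sub>v v) = (\<nu> / s) \<cdot>\<^sub>v v" by (simp add: smult_smult_assoc)
  finally show ?thesis using Xw sqnorm_normalized[OF pos] normalized_carrier[OF t] by blast
qed

lemma singular_pair:
  assumes X: "X \<in> carrier_mat n m" and n: "n > 0" and m: "m > 0"
  shows "\<exists>w v a b. w \<in> carrier_vec n \<and> sqnorm w = 1 \<and> v \<in> carrier_vec m \<and> sqnorm v = 1 \<and>
     X *\<^sub>v v = a \<cdot>\<^sub>v w \<and> adj X *\<^sub>v w = b \<cdot>\<^sub>v v"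
proof -
  obtain v \<nu> where v: "v \<in> carrier_vec m" "sqnorm v = 1" and ev: "(adj X * X) *\<^sub>v v = \<nu> \<cdot>\<^sub>v v"
    using unit_eigenvector[of "adj X * X" m] X m by (meson adj_carrier mult_carrier_mat)
  obtain w \<mu> where w: "w \<in> carrier_vec n" "sqnorm w = 1" and ew: "(adj (adj X) * adj X) *\<^sub>v w = \<mu> \<cdot>\<^sub>v w"
    using unit_eigenvector[of "X * adj X" n] X n by (metis adj_adj adj_carrier mult_carrier_mat)
  consider "X *\<^sub>v v \<noteq> 0\<^sub>v n" | "adj X *\<^sub>v w \<noteq> 0\<^sub>v m" | "X *\<^sub>v v = 0 \<cdot>\<^sub>v w" "adj X *\<^sub>v w = 0 \<cdot>\<^sub>v v"
    using v w by fastforce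
  then show ?thesis
  proof cases
    case 1
    then show ?thesis using singular_pair_of_eigenvector[OF X v(1) ev] v by blast
  next
    case 2
    then show ?thesis using singular_pair_of_eigenvector[OF adj_carrier[OF X] w(1) ew] w
      by (metis adj_adj)
  qed (use v w in blast)
qed

definition corner :: "complex \<Rightarrow> complex mat \<Rightarrow> complex mat" where
  "corner a A = mat (Suc (dim_row A)) (Suc (dim_col A)) (\<lambda>(i,j). if i = 0 \<and> j = 0 then a
      else if i = 0 \<or> j = 0 then 0 else A $$ (i - 1, j - 1))"

lemma corner_carrier: "A \<in> carrier_mat n m \<Longrightarrow> corner a A \<in> carrier_mat (Suc n) (Suc m)"
  unfolding corner_def by auto

lemma corner_dims[simp]: "dim_row (corner a A) = Suc (dim_row A)" "dim_col (corner a A) = Suc (dim_col A)"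
  unfolding corner_def by auto

lemma corner_mult: assumes A: "A \<in> carrier_mat n m" and B: "B \<in> carrier_mat m p"
  shows "corner a A * corner b B = corner (a * b) (A * B)"
proof (rule eq_matI)
  fix i j assume "i < dim_row (corner (a * b) (A * B))" "j < dim_col (corner (a * b) (A * B))"
  then have i: "i < Suc n" and j: "j < Suc p" using A B by auto
  have "(corner a A * corner b B) $$ (i,j) = (\<Sum>k<Suc m. corner a A $$ (i,k) * corner b B $$ (k,j))"
    by (rule mult_mat_index[OF corner_carrier[OF A] corner_carrier[OF B] i j])
  also have "\<dots> = corner a A $$ (i,0) * corner b B $$ (0,j)
      + (\<Sum>k<m. corner a A $$ (i, Suc k) * corner b B $$ (Suc k, j))"
    by (simp only: sum.lessThan_Suc_shift)
  also have "\<dots> = corner (a * b) (A * B) $$ (i,j)"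
    using i j A B by (cases i; cases j) (auto simp: corner_def mult_mat_index[OF A B] simp del: index_mult_mat(1))
  finally show "(corner a A * corner b B) $$ (i,j) = corner (a * b) (A * B) $$ (i,j)" .
qed (use A B in auto)

lemma corner_adj: "adj (corner a A) = corner (cnj a) (adj A)"
  by (rule eq_matI) (auto simp: corner_def adj_def)

lemma unitary_corner: assumes "unitary_mat n U" shows "unitary_mat (Suc n) (corner 1 U)"
proof -
  have U: "U \<in> carrier_mat n n" using assms unitary_carrier by auto
  have "adj (corner 1 U) * corner 1 U = corner 1 (1\<^sub>m n)"
    using U unitary_adj_left[OF assms] by (simp add: corner_adj corner_mult[of "adj U" n n U n])
  also have "corner 1 (1\<^sub>m n) = 1\<^sub>m (Suc n)"
    by (rule eq_matI) (auto simp: corner_def)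
  finally show ?thesis using corner_carrier[OF U] unfolding unitary_mat_def by auto
qed

lemma first_column_of_conjugate:
  assumes U: "unitary_mat n U" and V: "unitary_mat m V" and X: "X \<in> carrier_mat n m" and m: "m > 0"
    and Uw: "\<forall>r<n. U $$ (r,0) = w $ r" and Vv: "\<forall>s<m. V $$ (s,0) = v $ s"
    and w: "w \<in> carrier_vec n" and v: "v \<in> carrier_vec m" and Xv: "X *\<^sub>v v = a \<cdot>\<^sub>v w"
    and i: "i < n"
  shows "(adj U * X * V) $$ (i,0) = (if i = 0 then a else 0)"
proof -
  have Uc: "U \<in> carrier_mat n n" and Vc: "V \<in> carrier_mat m m" using U V unitary_carrier by auto
  have XV: "(X * V) $$ (r,0) = a * U $$ (r,0)" if r: "r < n" for r
  proof -
    have "(X * V) $$ (r,0) = (\<Sum>s<m. X $$ (r,s) * v $ s)"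
      using r m Vv by (simp add: mult_mat_index[OF X Vc] del: index_mult_mat(1))
    also have "\<dots> = (X *\<^sub>v v) $ r" using r X v by (simp add: scalar_prod_def atLeast0LessThan)
    finally show ?thesis using Xv r w Uw by simp
  qed
  have "(adj U * X * V) $$ (i,0) = (\<Sum>r<n. cnj (U $$ (r,i)) * (X * V) $$ (r,0))"
    using i Uc X Vc m by (simp add: mult_assoc_dims mult_mat_index[of _ n n _ m] del: index_mult_mat(1))
  also have "\<dots> = a * (\<Sum>r<n. cnj (U $$ (r,i)) * U $$ (r,0))"
    by (simp add: XV sum_distrib_left mult_ac)
  also have "(\<Sum>r<n. cnj (U $$ (r,i)) * U $$ (r,0)) = (adj U * U) $$ (i,0)"
    using i Uc by (simp add: mult_mat_index[of _ n n _ n] del: index_mult_mat(1))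
  finally show ?thesis using unitary_adj_left[OF U] i by simp
qed

lemma svd_deflation:
  assumes X: "X \<in> carrier_mat (Suc n) (Suc m)"
  shows "\<exists>U V a Y. unitary_mat (Suc n) U \<and> unitary_mat (Suc m) V \<and> Y \<in> carrier_mat n m \<and>
    X = U * corner a Y * adj V"
proof -
  obtain w v a b where w: "w \<in> carrier_vec (Suc n)" "sqnorm w = 1"
    and v: "v \<in> carrier_vec (Suc m)" "sqnorm v = 1"
    and Xv: "X *\<^sub>v v = a \<cdot>\<^sub>v w" and Xw: "adj X *\<^sub>v w = b \<cdot>\<^sub>v v"
    using singular_pair[OF X] by blast
  obtain U where U: "unitary_mat (Suc n) U" and Uw: "\<forall>i<Suc n. U $$ (i,0) = w $ i"
    using unitary_with_first_column[OF w] by blast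
  obtain V where V: "unitary_mat (Suc m) V" and Vv: "\<forall>i<Suc m. V $$ (i,0) = v $ i"
    using unitary_with_first_column[OF v] by blast
  have Uc: "U \<in> carrier_mat (Suc n) (Suc n)" and Vc: "V \<in> carrier_mat (Suc m) (Suc m)"
    using U V unitary_carrier by auto
  define Y where "Y = adj U * X * V"
  have Yc: "Y \<in> carrier_mat (Suc n) (Suc m)" unfolding Y_def using Uc Vc X by auto
  have col0: "Y $$ (i,0) = (if i = 0 then a else 0)" if "i < Suc n" for i
    unfolding Y_def by (rule first_column_of_conjugate[OF U V X _ Uw Vv w(1) v(1) Xv that]) simp
  have "adj Y = adj V * adj X * U"
    unfolding Y_def using Uc Vc X by (simp add: adj_mult mult_assoc_dims)
  then have "adj Y $$ (j,0) = (if j = 0 then b else 0)" if j: "j < Suc m" for j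
    using first_column_of_conjugate[OF V U adj_carrier[OF X] _ Vv Uw v(1) w(1) Xw j] by simp
  then have row0: "Y $$ (0,j) = (if j = 0 then cnj b else 0)" if j: "j < Suc m" for j
    using adj_index[of j Y 0] j Yc complex_cnj_cnj[of "Y $$ (0,j)"] by (auto simp del: complex_cnj_cnj)
  define Y' where "Y' = mat n m (\<lambda>(i,j). Y $$ (Suc i, Suc j))"
  have Y'c: "Y' \<in> carrier_mat n m" unfolding Y'_def by auto
  have "Y = corner a Y'"
  proof (rule eq_matI)
    fix i j assume "i < dim_row (corner a Y')" "j < dim_col (corner a Y')"
    then have i: "i < Suc n" and j: "j < Suc m" using Y'c by auto
    show "Y $$ (i,j) = corner a Y' $$ (i,j)"
      using col0[OF i] col0[of 0] row0[OF j] i j Y'c by (cases i; cases j) (auto simp: corner_def Y'_def)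
  qed (use Yc Y'c in auto)
  moreover have "X = U * Y * adj V"
    unfolding Y_def using Uc Vc X
    by (simp add: mult_assoc_dims unitary_adj_right[OF V] unitary_cancel_right[OF U])
  ultimately show ?thesis using U V Y'c by blast
qed

theorem svd:
  "n \<le> m \<Longrightarrow> X \<in> carrier_mat n m \<Longrightarrow> \<exists>U D V. unitary_mat n U \<and> unitary_mat m V \<and>
     D \<in> carrier_mat n m \<and> diagonal_mat D \<and> X = U * D * adj V"
proof (induction n arbitrary: m X)
  case 0
  have "X = 1\<^sub>m 0 * 0\<^sub>m 0 m * adj (1\<^sub>m m)" using 0 by (intro eq_matI) auto
  then show ?case using unitary_one[of 0] unitary_one[of m]
    by (intro exI[of _ "1\<^sub>m 0"] exI[of _ "0\<^sub>m 0 m"] exI[of _ "1\<^sub>m m"]) (auto simp: diagonal_mat_def)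
next
  case (Suc n)
  then obtain m' where m: "m = Suc m'" by (cases m) auto
  obtain U0 V0 a Y where U0: "unitary_mat (Suc n) U0" and V0: "unitary_mat m V0"
    and Yc: "Y \<in> carrier_mat n m'" and X: "X = U0 * corner a Y * adj V0"
    using svd_deflation[of X n m'] Suc.prems m by blast
  obtain U' D' V' where U': "unitary_mat n U'" and V': "unitary_mat m' V'"
    and D'c: "D' \<in> carrier_mat n m'" and D'd: "diagonal_mat D'" and Y: "Y = U' * D' * adj V'"
    using Suc.IH[of m' Y] Suc.prems m Yc by auto
  have U'c: "U' \<in> carrier_mat n n" and V'c: "V' \<in> carrier_mat m' m'"
    using U' V' unitary_carrier by auto
  have "corner a Y = corner 1 U' * corner a D' * adj (corner 1 V')"
    unfolding Y corner_adj using U'c D'c V'c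
    by (simp add: corner_mult[of U' n n D' m'] corner_mult[of "U' * D'" n m' "adj V'" m'])
  then have "X = (U0 * corner 1 U') * corner a D' * adj (V0 * corner 1 V')"
    unfolding X using unitary_carrier[OF U0] unitary_carrier[OF V0] U'c V'c D'c m
    by (simp add: mult_assoc_dims adj_mult)
  moreover have "diagonal_mat (corner a D')"
    using D'd D'c unfolding diagonal_mat_def corner_def by auto
  moreover have "unitary_mat (Suc n) (U0 * corner 1 U')" "unitary_mat m (V0 * corner 1 V')"
    using unitary_mult U0 V0 unitary_corner[OF U'] unitary_corner[OF V'] m by auto
  ultimately show ?case using corner_carrier[OF D'c] m by blast
qed

lemma mult_cnj_self: "z * cnj z = complex_of_real ((cmod z)\<^sup>2)"
  using complex_norm_square[of z] by simp

lemma diagonal_mult_adj: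
  assumes D: "D \<in> carrier_mat n m" and dg: "diagonal_mat D" and nm: "n \<le> m" and i: "i < n" and j: "j < n"
  shows "(D * adj D) $$ (i,j) = (if i = j then complex_of_real ((cmod (D $$ (i,i)))\<^sup>2) else 0)"
proof -
  have "(D * adj D) $$ (i,j) = (\<Sum>k<m. D $$ (i,k) * cnj (D $$ (j,k)))"
    using i j D by (simp add: mult_mat_index[OF D adj_carrier[OF D]] del: index_mult_mat(1))
  also have "\<dots> = (\<Sum>k<m. if k = i then (if i = j then D $$ (i,i) * cnj (D $$ (i,i)) else 0) else 0)"
    using dg D i j nm unfolding diagonal_mat_def by (intro sum.cong) auto
  finally show ?thesis using i nm by (simp add: mult_cnj_self del: of_real_power)
qed

lemma diagonal_normal:
  assumes D: "D \<in> carrier_mat n n" and dg: "diagonal_mat D" shows "adj D * D = D * adj D"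
proof (rule eq_matI)
  fix i j assume "i < dim_row (D * adj D)" "j < dim_col (D * adj D)"
  then have i: "i < n" and j: "j < n" using D by auto
  have "(adj D * D) $$ (i,j) = (\<Sum>k<n. cnj (D $$ (k,i)) * D $$ (k,j))"
    using i j D by (simp add: mult_mat_index[OF adj_carrier[OF D] D] del: index_mult_mat(1))
  also have "\<dots> = (\<Sum>k<n. if k = i then (if i = j then D $$ (i,i) * cnj (D $$ (i,i)) else 0) else 0)"
    using dg D i j unfolding diagonal_mat_def by (intro sum.cong) auto
  also have "\<dots> = (D * adj D) $$ (i,j)"
    using diagonal_mult_adj[OF D dg le_refl i j] i by (simp add: mult_cnj_self del: of_real_power)
  finally show "(adj D * D) $$ (i,j) = (D * adj D) $$ (i,j)" .
qed (use D in auto)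

lemma gram_unitarily_similar:
  assumes C: "C \<in> carrier_mat n n"
  shows "\<exists>Q. unitary_mat n Q \<and> adj C * C = adj Q * (C * adj C) * Q"
proof -
  obtain U D V where U: "unitary_mat n U" and V: "unitary_mat n V" and Dc: "D \<in> carrier_mat n n"
    and dg: "diagonal_mat D" and CUDV: "C = U * D * adj V"
    using svd[OF le_refl C] by blast
  note carriers = unitary_carrier[OF U] unitary_carrier[OF V] Dc
  have "adj C * C = V * (adj D * D) * adj V"
    unfolding CUDV using carriers by (simp add: adj_mult mult_assoc_dims unitary_cancel_left[OF U])
  also have "\<dots> = adj (U * adj V) * (C * adj C) * (U * adj V)"
    unfolding CUDV diagonal_normal[OF Dc dg] using carriers
    by (simp add: adj_mult mult_assoc_dims unitary_cancel_left[OF U] unitary_cancel_left[OF V])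
  finally show ?thesis using unitary_mult[OF U unitary_adj[OF V]] by blast
qed

text \<open>For \<open>n \<le> m\<close>, \<open>M M\<^sup>\<dagger>\<close> has a Hermitian square root (\<open>U |D| U\<^sup>\<dagger>\<close> from the SVD of \<open>M\<close>).\<close>
lemma hermitian_square_root:
  assumes M: "M \<in> carrier_mat n m" and nm: "n \<le> m"
  shows "\<exists>R. R \<in> carrier_mat n n \<and> adj R = R \<and> M * adj M = R * R"
proof -
  obtain U D V where U: "unitary_mat n U" and V: "unitary_mat m V" and Dc: "D \<in> carrier_mat n m"
    and dg: "diagonal_mat D" and MUDV: "M = U * D * adj V"
    using svd[OF nm M] by blast
  note carriers = unitary_carrier[OF U] unitary_carrier[OF V] Dc
  define S where "S = mat n n (\<lambda>(i,j). if i = j then complex_of_real (cmod (D $$ (i,i))) else 0)"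
  have Sc: "S \<in> carrier_mat n n" unfolding S_def by auto
  have adjS: "adj S = S" unfolding S_def by (rule eq_matI) auto
  have SS: "S * S = D * adj D"
  proof (rule eq_matI)
    fix i j assume "i < dim_row (D * adj D)" "j < dim_col (D * adj D)"
    then have i: "i < n" and j: "j < n" using Dc by auto
    have "(S * S) $$ (i,j) = (\<Sum>k<n. S $$ (i,k) * S $$ (k,j))"
      using i j by (rule mult_mat_index[OF Sc Sc])
    also have "\<dots> = (\<Sum>k<n. if k = i then (if i = j then
        complex_of_real ((cmod (D $$ (i,i)))\<^sup>2) else 0) else 0)"
      using i j by (intro sum.cong refl) (auto simp: S_def power2_eq_square)
    finally show "(S * S) $$ (i,j) = (D * adj D) $$ (i,j)"
      using i j by (simp add: diagonal_mult_adj[OF Dc dg nm i j])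
  qed (use Sc Dc in auto)
  define R where "R = U * S * adj U"
  have "M * adj M = U * (S * S) * adj U"
    unfolding MUDV SS using carriers by (simp add: adj_mult mult_assoc_dims unitary_cancel_left[OF V])
  also have "\<dots> = R * R"
    unfolding R_def using carriers Sc by (simp add: mult_assoc_dims unitary_cancel_left[OF U])
  moreover have "adj R = R" unfolding R_def using carriers Sc by (simp add: adj_mult adjS mult_assoc_dims)
  moreover have "R \<in> carrier_mat n n"
    unfolding R_def using mult_carrier_mat[OF mult_carrier_mat[OF carriers(1) Sc] adj_carrier[OF carriers(1)]] .
  ultimately show ?thesis by (intro exI[of _ R]) simp
qed

text \<open>Entries of a unitary matrix have modulus at most \<open>1\<close> (its columns are unit vectors).\<close>
lemma unitary_entry_bound:
  assumes U: "unitary_mat d U" and i: "i < d" and j: "j < d"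
  shows "cmod (U $$ (i,j)) \<le> 1"
proof -
  have Uc: "U \<in> carrier_mat d d" using U unitary_carrier by auto
  have "complex_of_real 1 = (adj U * U) $$ (j,j)" using unitary_adj_left[OF U] j by simp
  also have "\<dots> = (\<Sum>r<d. U $$ (r,j) * cnj (U $$ (r,j)))"
    using j Uc by (simp add: mult_mat_index[OF adj_carrier[OF Uc] Uc] mult.commute del: index_mult_mat(1))
  also have "\<dots> = complex_of_real (\<Sum>r<d. (cmod (U $$ (r,j)))\<^sup>2)"
    by (simp add: mult_cnj_self del: of_real_power)
  finally have "(\<Sum>r<d. (cmod (U $$ (r,j)))\<^sup>2) = 1" by (metis of_real_eq_iff)
  moreover have "(cmod (U $$ (i,j)))\<^sup>2 \<le> (\<Sum>r<d. (cmod (U $$ (r,j)))\<^sup>2)"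
    using i by (intro member_le_sum) auto
  ultimately show ?thesis by (simp add: power_le_one_iff abs_le_iff)
qed

text \<open>A crude bound making the supremum in the fidelity finite.\<close>
lemma tr_unitary_bound:
  assumes U: "unitary_mat d U" and X: "X \<in> carrier_mat d d"
  shows "cmod (tr (U * X)) \<le> (\<Sum>i<d. \<Sum>k<d. cmod (X $$ (k,i)))"
proof -
  have "cmod (tr (U * X)) \<le> (\<Sum>i<d. \<Sum>k<d. cmod (U $$ (i,k) * X $$ (k,i)))"
    unfolding tr_mult[OF unitary_carrier[OF U] X] by (rule order_trans[OF norm_sum sum_mono]) (rule norm_sum)
  also have "\<dots> \<le> (\<Sum>i<d. \<Sum>k<d. cmod (X $$ (k,i)))"
    using unitary_entry_bound[OF U] by (intro sum_mono) (simp add: norm_mult mult_left_le_one_le)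
  finally show ?thesis .
qed

lemma W_set_unitary: "W \<in> W_set d \<Lambda> \<Longrightarrow> unitary_mat d W"
  unfolding W_set_def by auto

lemma W_set_carrier: "W \<in> W_set d \<Lambda> \<Longrightarrow> W \<in> carrier_mat d d"
  using W_set_unitary unitary_carrier by blast

text \<open>The spectrum is a unitary invariant, so \<open>W\<^sub>\<Lambda>\<close> is closed under unitary conjugation.\<close>
lemma W_set_conj:
  assumes W: "W \<in> W_set d \<Lambda>" and Q: "unitary_mat d Q"
  shows "Q * W * adj Q \<in> W_set d \<Lambda>"
proof -
  have Qc: "Q \<in> carrier_mat d d" and Wc: "W \<in> carrier_mat d d" using Q W unitary_carrier W_set_carrier by auto
  have "similar_mat (Q * W * adj Q) W"
    using Qc Wc unitary_adj_right[OF Q] unitary_adj_left[OF Q] by (intro similar_matI[of _ _ Q "adj Q" d]) auto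
  then have "char_poly (Q * W * adj Q) = char_poly W" by (rule char_poly_similar)
  moreover have "unitary_mat d (Q * W * adj Q)"
    using unitary_mult[OF unitary_mult[OF Q W_set_unitary[OF W]] unitary_adj[OF Q]] .
  ultimately show ?thesis using W unfolding W_set_def by auto
qed

text \<open>The diagonal matrix with the prescribed eigenvalues lies in \<open>W\<^sub>\<Lambda>\<close>.\<close>
lemma W_set_nonempty: assumes "is_spectrum d \<Lambda>" shows "W_set d \<Lambda> \<noteq> {}"
proof -
  obtain xs where xs: "mset xs = \<Lambda>" using ex_mset by blast
  have len: "length xs = d" using assms xs unfolding is_spectrum_def by (metis size_mset)
  have unimodular: "cmod (xs ! i) = 1" if "i < d" for i
    using assms xs len that unfolding is_spectrum_def by (metis nth_mem set_mset_mset)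
  define W where "W = mat d d (\<lambda>(i,j). if i = j then xs ! i else 0)"
  have Wc: "W \<in> carrier_mat d d" unfolding W_def by auto
  have ut: "upper_triangular W" unfolding W_def upper_triangular_def by auto
  have "diag_mat W = xs" unfolding diag_mat_def W_def using len by (intro nth_equalityI) auto
  then have cp: "char_poly W = (\<Prod>x\<in>#\<Lambda>. [:-x, 1:])"
    unfolding char_poly_upper_triangular[OF Wc ut] xs[symmetric] by (simp add: prod_mset_prod_list[symmetric])
  have "adj W * W = 1\<^sub>m d"
  proof (rule eq_matI)
    fix i j assume "i < dim_row (1\<^sub>m d)" "j < dim_col (1\<^sub>m d)"
    then have i: "i < d" and j: "j < d" by auto
    have "(adj W * W) $$ (i,j) = (\<Sum>k<d. cnj (W $$ (k,i)) * W $$ (k,j))"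
      using i j Wc by (simp add: mult_mat_index[OF adj_carrier[OF Wc] Wc] del: index_mult_mat(1))
    also have "\<dots> = (\<Sum>k<d. if k = i then (if i = j then xs ! i * cnj (xs ! i) else 0) else 0)"
      using i j by (intro sum.cong) (auto simp: W_def)
    finally show "(adj W * W) $$ (i,j) = 1\<^sub>m d $$ (i,j)"
      using i j unimodular[OF i] by (auto simp: mult_cnj_self simp del: of_real_power)
  qed (use Wc in auto)
  then have "W \<in> W_set d \<Lambda>" using cp Wc unfolding W_set_def unitary_mat_def by auto
  then show ?thesis by auto
qed

definition fid_mat :: "nat \<Rightarrow> complex multiset \<Rightarrow> complex mat \<Rightarrow> real" where
  "fid_mat d \<Lambda> X = (SUP W\<in>W_set d \<Lambda>. (cmod (tr (W * X)))\<^sup>2)"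

lemma fid_mat_upper:
  assumes X: "X \<in> carrier_mat d d" and W: "W \<in> W_set d \<Lambda>"
  shows "(cmod (tr (W * X)))\<^sup>2 \<le> fid_mat d \<Lambda> X"
  unfolding fid_mat_def
proof (rule cSUP_upper[OF W bdd_aboveI2])
  fix W assume "W \<in> W_set d \<Lambda>"
  then show "(cmod (tr (W * X)))\<^sup>2 \<le> (\<Sum>i<d. \<Sum>k<d. cmod (X $$ (k,i)))\<^sup>2"
    using tr_unitary_bound[OF W_set_unitary X] by (intro power_mono) auto
qed

lemma fid_mat_least:
  "W_set d \<Lambda> \<noteq> {} \<Longrightarrow> (\<And>W. W \<in> W_set d \<Lambda> \<Longrightarrow> (cmod (tr (W * X)))\<^sup>2 \<le> c) \<Longrightarrow> fid_mat d \<Lambda> X \<le> c"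
  unfolding fid_mat_def by (rule cSUP_least)

lemma fid_mat_nonneg:
  assumes "W_set d \<Lambda> \<noteq> {}" and "X \<in> carrier_mat d d" shows "fid_mat d \<Lambda> X \<ge> 0"
proof -
  obtain W where "W \<in> W_set d \<Lambda>" using assms by auto
  then show ?thesis using fid_mat_upper[OF assms(2)] by (meson order_trans zero_le_power2)
qed

definition coef_mat :: "nat \<Rightarrow> nat \<Rightarrow> complex vec \<Rightarrow> complex mat" where
  "coef_mat dA dB \<phi> = mat dA dB (\<lambda>(i,j). \<phi> $ (i*dB + j))"

lemma coef_mat_carrier[simp]: "coef_mat dA dB \<phi> \<in> carrier_mat dA dB"
  unfolding coef_mat_def by auto

lemma coef_mat_dims[simp]: "dim_row (coef_mat dA dB \<phi>) = dA" "dim_col (coef_mat dA dB \<phi>) = dB"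
  unfolding coef_mat_def by auto

lemma coef_mat_index: "i < dA \<Longrightarrow> j < dB \<Longrightarrow> coef_mat dA dB \<phi> $$ (i,j) = \<phi> $ (i*dB + j)"
  unfolding coef_mat_def by simp

lemma pair_index_less: assumes "i < (a::nat)" "j < b" shows "i*b + j < a*b"
proof -
  have "i*b + j < (i + 1) * b" using assms(2) by simp
  also have "\<dots> \<le> a*b" using assms(1) by (intro mult_right_mono) auto
  finally show ?thesis .
qed

lemma tensor_id_right_carrier: "X \<in> carrier_mat dA dA \<Longrightarrow> tensor_id_right dB X \<in> carrier_mat (dA*dB) (dA*dB)"
  unfolding tensor_id_right_def by auto

lemma tensor_id_left_carrier: "Y \<in> carrier_mat dB dB \<Longrightarrow> tensor_id_left dA Y \<in> carrier_mat (dA*dB) (dA*dB)"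
  unfolding tensor_id_left_def by auto

lemma coef_mat_tensor_right:
  assumes X: "X \<in> carrier_mat dA dA" and phi: "\<phi> \<in> carrier_vec (dA*dB)"
  shows "coef_mat dA dB (tensor_id_right dB X *\<^sub>v \<phi>) = X * coef_mat dA dB \<phi>"
proof (rule eq_matI)
  fix i j assume "i < dim_row (X * coef_mat dA dB \<phi>)" "j < dim_col (X * coef_mat dA dB \<phi>)"
  then have i: "i < dA" and j: "j < dB" using X by auto
  have "(tensor_id_right dB X *\<^sub>v \<phi>) $ (i*dB + j)
      = (\<Sum>c<dA*dB. tensor_id_right dB X $$ (i*dB + j, c) * \<phi> $ c)"
    using pair_index_less[OF i j] tensor_id_right_carrier[where dB=dB, OF X] phi
    by (simp add: scalar_prod_def atLeast0LessThan)
  also have "\<dots> = (\<Sum>i'<dA. \<Sum>j'<dB. if j' = j then X $$ (i,i') * \<phi> $ (i'*dB + j) else 0)"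
    unfolding sum_mult_split using i j X pair_index_less
    by (intro sum.cong refl) (auto simp: tensor_id_right_def)
  also have "\<dots> = (X * coef_mat dA dB \<phi>) $$ (i,j)"
    using i j X by (simp add: mult_mat_index[OF X coef_mat_carrier] coef_mat_index del: index_mult_mat(1))
  finally show "coef_mat dA dB (tensor_id_right dB X *\<^sub>v \<phi>) $$ (i,j) = (X * coef_mat dA dB \<phi>) $$ (i,j)"
    using i j by (simp add: coef_mat_index)
qed (use X in auto)

lemma coef_mat_tensor_left:
  assumes Y: "Y \<in> carrier_mat dB dB" and phi: "\<phi> \<in> carrier_vec (dA*dB)"
  shows "coef_mat dA dB (tensor_id_left dA Y *\<^sub>v \<phi>) = coef_mat dA dB \<phi> * transpose_mat Y"
proof (rule eq_matI)
  fix i j assume "i < dim_row (coef_mat dA dB \<phi> * transpose_mat Y)" "j < dim_col (coef_mat dA dB \<phi> * transpose_mat Y)"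
  then have i: "i < dA" and j: "j < dB" using Y by auto
  have "(tensor_id_left dA Y *\<^sub>v \<phi>) $ (i*dB + j)
      = (\<Sum>c<dA*dB. tensor_id_left dA Y $$ (i*dB + j, c) * \<phi> $ c)"
    using pair_index_less[OF i j] tensor_id_left_carrier[where dA=dA, OF Y] phi
    by (simp add: scalar_prod_def atLeast0LessThan)
  also have "\<dots> = (\<Sum>i'<dA. if i' = i then (\<Sum>j'<dB. Y $$ (j,j') * \<phi> $ (i*dB + j')) else 0)"
    unfolding sum_mult_split using i j Y pair_index_less
    by (intro sum.cong refl) (auto simp: tensor_id_left_def)
  also have "\<dots> = (coef_mat dA dB \<phi> * transpose_mat Y) $$ (i,j)"
    using i j Y by (auto simp: mult_mat_index[OF coef_mat_carrier, of "transpose_mat Y" dB] coef_mat_index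
        mult.commute simp del: index_mult_mat(1) intro!: sum.cong)
  finally show "coef_mat dA dB (tensor_id_left dA Y *\<^sub>v \<phi>) $$ (i,j) = (coef_mat dA dB \<phi> * transpose_mat Y) $$ (i,j)"
    using i j by (simp add: coef_mat_index)
qed (use Y in auto)

text \<open>The reduced density matrix \<open>\<rho>\<^sub>A = tr\<^sub>B |\<phi>\<rangle>\<langle>\<phi>| = M M\<^sup>\<dagger>\<close>.\<close>
definition reduced :: "nat \<Rightarrow> nat \<Rightarrow> complex vec \<Rightarrow> complex mat" where
  "reduced dA dB \<phi> = coef_mat dA dB \<phi> * adj (coef_mat dA dB \<phi>)"

lemma reduced_carrier[simp]: "reduced dA dB \<phi> \<in> carrier_mat dA dA"
  unfolding reduced_def by (simp add: mult_carrier_mat[OF coef_mat_carrier adj_carrier[OF coef_mat_carrier]])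

lemma reduced_dims[simp]: "dim_row (reduced dA dB \<phi>) = dA" "dim_col (reduced dA dB \<phi>) = dA"
  unfolding reduced_def by simp_all

lemma braket_reduced:
  assumes W: "W \<in> carrier_mat dA dA" and phi: "\<phi> \<in> carrier_vec (dA*dB)"
  shows "braket \<phi> (tensor_id_right dB W *\<^sub>v \<phi>) = tr (W * reduced dA dB \<phi>)"
proof -
  let ?M = "coef_mat dA dB \<phi>"
  let ?v = "tensor_id_right dB W *\<^sub>v \<phi>"
  have "dim_vec ?v = dA * dB" using tensor_id_right_carrier[where dB=dB, OF W] by simp
  then have "braket \<phi> ?v = (\<Sum>i<dA. \<Sum>j<dB. cnj (\<phi> $ (i*dB + j)) * ?v $ (i*dB + j))"
    unfolding braket_def by (simp only: sum_mult_split)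
  also have "\<dots> = (\<Sum>i<dA. \<Sum>j<dB. (W * ?M) $$ (i,j) * adj ?M $$ (j,i))"
    by (intro sum.cong refl) (simp add: coef_mat_index mult.commute flip: coef_mat_tensor_right[OF W phi])
  also have "\<dots> = tr (W * ?M * adj ?M)" using W by (simp add: tr_mult[of _ dA dB])
  finally show ?thesis unfolding reduced_def using W by (simp add: mult_assoc_dims)
qed

lemma sqnorm_reduced:
  assumes phi: "\<phi> \<in> carrier_vec (dA*dB)"
  shows "complex_of_real (sqnorm \<phi>) = tr (reduced dA dB \<phi>)"
proof -
  have "complex_of_real (sqnorm \<phi>) = (\<Sum>i<dA. \<Sum>j<dB. \<phi> $ (i*dB + j) * cnj (\<phi> $ (i*dB + j)))"
    using phi by (simp add: complex_of_sqnorm sum_mult_split)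
  also have "\<dots> = tr (reduced dA dB \<phi>)"
    unfolding reduced_def tr_mult[OF coef_mat_carrier adj_carrier[OF coef_mat_carrier]]
    by (intro sum.cong refl) (simp add: coef_mat_index)
  finally show ?thesis .
qed

lemma F_fid_eq_fid_mat:
  "\<phi> \<in> carrier_vec (dA*dB) \<Longrightarrow> F_fid dA dB \<Lambda> \<phi> = fid_mat dA \<Lambda> (reduced dA dB \<phi>)"
  unfolding F_fid_def fid_mat_def using braket_reduced[OF W_set_carrier] by (intro SUP_cong refl) simp

lemma reduced_smult:
  assumes "\<phi> \<in> carrier_vec (dA*dB)"
  shows "reduced dA dB (c \<cdot>\<^sub>v \<phi>) = (c * cnj c) \<cdot>\<^sub>m reduced dA dB \<phi>"
proof -
  have "coef_mat dA dB (c \<cdot>\<^sub>v \<phi>) = c \<cdot>\<^sub>m coef_mat dA dB \<phi>"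
    using assms by (intro eq_matI) (auto simp: coef_mat_index pair_index_less)
  moreover have "adj (c \<cdot>\<^sub>m coef_mat dA dB \<phi>) = cnj c \<cdot>\<^sub>m adj (coef_mat dA dB \<phi>)"
    by (intro eq_matI) auto
  ultimately have "reduced dA dB (c \<cdot>\<^sub>v \<phi>) = cnj c \<cdot>\<^sub>m (c \<cdot>\<^sub>m reduced dA dB \<phi>)"
    unfolding reduced_def by (simp add: mult_smult_assoc_mat[of _ dA dB _ dA] mult_smult_distrib[of _ dA dB _ dA])
  also have "\<dots> = (c * cnj c) \<cdot>\<^sub>m reduced dA dB \<phi>"
    by (rule eq_matI) auto
  finally show ?thesis .
qed

lemma branch_bound:
  assumes phi: "\<phi> \<in> carrier_vec (dA*dB)" and W: "W \<in> W_set dA \<Lambda>"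
  shows "cmod (tr (W * reduced dA dB \<phi>)) \<le> sqnorm \<phi> * sqrt (F_fid dA dB \<Lambda> (normalized \<phi>))"
proof (cases "sqnorm \<phi> = 0")
  case True
  then have "coef_mat dA dB \<phi> = 0\<^sub>m dA dB"
    using sqnorm_eq_0[OF phi] by (intro eq_matI) (auto simp: coef_mat_index pair_index_less)
  then have "reduced dA dB \<phi> = 0\<^sub>m dA dA" unfolding reduced_def by simp
  then show ?thesis using W_set_carrier[OF W] True by (simp add: tr_def)
next
  case False
  then have p: "sqnorm \<phi> > 0" using sqnorm_nonneg[of \<phi>] by simp
  have "reduced dA dB \<phi> = reduced dA dB (complex_of_real (sqrt (sqnorm \<phi>)) \<cdot>\<^sub>v normalized \<phi>)"
    using normalized_scale[OF p] by simp
  also have "\<dots> = complex_of_real (sqnorm \<phi>) \<cdot>\<^sub>m reduced dA dB (normalized \<phi>)"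
    using p phi by (simp add: reduced_smult flip: of_real_mult)
  finally have "cmod (tr (W * reduced dA dB \<phi>)) = sqnorm \<phi> * cmod (tr (W * reduced dA dB (normalized \<phi>)))"
    using W_set_carrier[OF W] p by (simp add: tr_smult[of _ dA] norm_mult)
  moreover have "cmod (tr (W * reduced dA dB (normalized \<phi>))) \<le> sqrt (F_fid dA dB \<Lambda> (normalized \<phi>))"
    using fid_mat_upper[OF reduced_carrier W] F_fid_eq_fid_mat[OF normalized_carrier[OF phi]]
    by (simp add: real_le_rsqrt)
  ultimately show ?thesis using p by (simp add: mult_left_mono)
qed

text \<open>The elementary inequality behind the theorem: if \<open>F\<^sub>0 \<le> (\<Sum> p\<^sub>k \<surd>f\<^sub>k)\<^sup>2\<close> for a probability
  vector \<open>p\<close>, then also \<open>\<Sum> p\<^sub>k (1 - f\<^sub>k) \<le> 1 - F\<^sub>0\<close> (by Cauchy--Schwarz/Jensen).\<close>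
lemma weighted_sqrt_bound:
  fixes p f :: "'k \<Rightarrow> real"
  assumes fin: "finite T" and p: "\<And>k. k \<in> T \<Longrightarrow> p k \<ge> 0" and total: "(\<Sum>k\<in>T. p k) = 1"
    and f: "\<And>k. k \<in> T \<Longrightarrow> f k \<ge> 0" and F0: "F0 \<ge> 0"
    and le: "F0 \<le> (\<Sum>k\<in>T. p k * sqrt (f k))\<^sup>2"
  shows "sqrt F0 \<le> (\<Sum>k\<in>T. p k * sqrt (f k)) \<and> (\<Sum>k\<in>T. p k * (1 - f k)) \<le> 1 - F0"
proof -
  define S where "S = (\<Sum>k\<in>T. p k * sqrt (f k))"
  have "S \<ge> 0" unfolding S_def using p f by (intro sum_nonneg) simp
  then have sqrt_le: "sqrt F0 \<le> S" using le unfolding S_def[symmetric] by (simp add: real_le_lsqrt)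
  have "0 \<le> (\<Sum>k\<in>T. p k * (sqrt (f k) - S)\<^sup>2)"
    using p by (intro sum_nonneg mult_nonneg_nonneg) auto
  also have "\<dots> = (\<Sum>k\<in>T. p k * f k - 2 * S * (p k * sqrt (f k)) + S\<^sup>2 * p k)"
    using f by (intro sum.cong refl) (simp add: power2_diff algebra_simps)
  also have "\<dots> = (\<Sum>k\<in>T. p k * f k) - 2 * S * (\<Sum>k\<in>T. p k * sqrt (f k)) + S\<^sup>2 * (\<Sum>k\<in>T. p k)"
    by (simp add: sum.distrib sum_subtractf sum_distrib_left)
  also have "\<dots> = (\<Sum>k\<in>T. p k * f k) - S\<^sup>2"
    using total unfolding S_def[symmetric] by (simp add: power2_eq_square)
  finally have "S\<^sup>2 \<le> (\<Sum>k\<in>T. p k * f k)" by simp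
  moreover have "(\<Sum>k\<in>T. p k * (1 - f k)) = 1 - (\<Sum>k\<in>T. p k * f k)"
    using total by (simp add: algebra_simps sum_subtractf)
  ultimately show ?thesis using sqrt_le le unfolding S_def by linarith
qed

text \<open>Suppose the reduced state of \<open>\<psi>\<close> splits into
  branches \<open>\<phi>\<^sub>k\<close> in the sense that \<open>tr (W \<rho>\<^sub>\<psi>) = \<Sum>\<^sub>k tr (Q\<^sub>k W Q\<^sub>k\<^sup>\<dagger> \<rho>\<^sub>\<phi>\<^sub>\<^sub>k)\<close> for all \<open>W\<close>, with
  unitaries \<open>Q\<^sub>k\<close>.  Taking \<open>W = 1\<close> shows that the \<open>p\<^sub>k = \<parallel>\<phi>\<^sub>k\<parallel>\<^sup>2\<close> form a probability vector; taking
  \<open>W \<in> W\<^sub>\<Lambda>\<close> and using that \<open>W\<^sub>\<Lambda>\<close> is conjugation invariant gives \<open>\<surd>F(\<psi>) \<le> \<Sum> p\<^sub>k \<surd>F(\<psi>\<^sub>k)\<close>.\<close>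
lemma monotone_under_decomposition:
  fixes K :: "'k set" and \<phi> Q :: "'k \<Rightarrow> _"
  assumes spec: "is_spectrum d \<Lambda>"
    and psi: "\<psi> \<in> carrier_vec (d * dB)" "sqnorm \<psi> = 1"
    and finK: "finite K"
    and phi: "\<And>k. k \<in> K \<Longrightarrow> \<phi> k \<in> carrier_vec (d * dB)"
    and Q: "\<And>k. k \<in> K \<Longrightarrow> unitary_mat d (Q k)"
    and decomp: "\<And>W. W \<in> carrier_mat d d \<Longrightarrow>
      tr (W * reduced d dB \<psi>) = (\<Sum>k\<in>K. tr (Q k * W * adj (Q k) * reduced d dB (\<phi> k)))"
  shows "sqrt (F_fid d dB \<Lambda> \<psi>)
      \<le> (\<Sum>k\<in>{k\<in>K. sqnorm (\<phi> k) > 0}. sqnorm (\<phi> k) * sqrt (F_fid d dB \<Lambda> (normalized (\<phi> k))))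
    \<and> (\<Sum>k\<in>{k\<in>K. sqnorm (\<phi> k) > 0}. sqnorm (\<phi> k) * E_ent d dB \<Lambda> (normalized (\<phi> k)))
      \<le> E_ent d dB \<Lambda> \<psi>"
proof -
  define p where "p k = sqnorm (\<phi> k)" for k
  define f where "f k = F_fid d dB \<Lambda> (normalized (\<phi> k))" for k
  define T where "T = {k\<in>K. p k > 0}"
  have Wne: "W_set d \<Lambda> \<noteq> {}" by (rule W_set_nonempty[OF spec])
  have drop_null: "(\<Sum>k\<in>T. p k * g k) = (\<Sum>k\<in>K. p k * g k)" for g
    unfolding T_def using finK sqnorm_nonneg[of "\<phi> _"]
    by (intro sum.mono_neutral_left) (auto simp: p_def order_less_le)
  have "Q k * 1\<^sub>m d * adj (Q k) = 1\<^sub>m d" if "k \<in> K" for k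
    using unitary_carrier[OF Q[OF that]] unitary_adj_right[OF Q[OF that]] by simp
  then have "complex_of_real (\<Sum>k\<in>K. p k) = (\<Sum>k\<in>K. tr (Q k * 1\<^sub>m d * adj (Q k) * reduced d dB (\<phi> k)))"
    unfolding of_real_sum p_def using phi by (intro sum.cong refl) (simp add: sqnorm_reduced)
  also have "\<dots> = complex_of_real (sqnorm \<psi>)"
    using decomp[OF one_carrier_mat] sqnorm_reduced[OF psi(1)] by simp
  finally have "(\<Sum>k\<in>T. p k * 1) = 1" using psi(2) drop_null[of "\<lambda>_. 1"] of_real_eq_iff by fastforce
  define S where "S = (\<Sum>k\<in>T. p k * sqrt (f k))"
  have "(cmod (tr (W * reduced d dB \<psi>)))\<^sup>2 \<le> S\<^sup>2" if W: "W \<in> W_set d \<Lambda>" for W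
  proof -
    have "cmod (tr (W * reduced d dB \<psi>)) \<le> (\<Sum>k\<in>K. cmod (tr (Q k * W * adj (Q k) * reduced d dB (\<phi> k))))"
      unfolding decomp[OF W_set_carrier[OF W]] by (rule norm_sum)
    also have "\<dots> \<le> (\<Sum>k\<in>K. p k * sqrt (f k))"
      using branch_bound[OF phi W_set_conj[OF W Q]] unfolding p_def f_def by (intro sum_mono) auto
    finally show ?thesis unfolding S_def drop_null by (intro power_mono) auto
  qed
  then have "F_fid d dB \<Lambda> \<psi> \<le> S\<^sup>2"
    unfolding F_fid_eq_fid_mat[OF psi(1)] by (rule fid_mat_least[OF Wne])
  moreover have "F_fid d dB \<Lambda> \<phi>' \<ge> 0" if "\<phi>' \<in> carrier_vec (d * dB)" for \<phi>'
    unfolding F_fid_eq_fid_mat[OF that] by (rule fid_mat_nonneg[OF Wne reduced_carrier])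
  ultimately have "sqrt (F_fid d dB \<Lambda> \<psi>) \<le> S \<and> (\<Sum>k\<in>T. p k * (1 - f k)) \<le> 1 - F_fid d dB \<Lambda> \<psi>"
    using \<open>(\<Sum>k\<in>T. p k * 1) = 1\<close> psi(1) phi unfolding S_def
    by (intro weighted_sqrt_bound) (auto simp: T_def f_def finK)
  then show ?thesis unfolding S_def T_def p_def f_def E_ent_def .
qed

lemma reduced_tensor_right:
  assumes X: "X \<in> carrier_mat dA dA" and phi: "\<phi> \<in> carrier_vec (dA*dB)"
  shows "reduced dA dB (tensor_id_right dB X *\<^sub>v \<phi>) = X * reduced dA dB \<phi> * adj X"
  unfolding reduced_def coef_mat_tensor_right[OF X phi] using X by (simp add: adj_mult mult_assoc_dims)

lemma reduced_tensor_left: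
  assumes Y: "Y \<in> carrier_mat dB dB" and phi: "\<phi> \<in> carrier_vec (dA*dB)"
  shows "reduced dA dB (tensor_id_left dA Y *\<^sub>v \<phi>) =
    coef_mat dA dB \<phi> * (transpose_mat Y * adj (transpose_mat Y)) * adj (coef_mat dA dB \<phi>)"
  unfolding reduced_def coef_mat_tensor_left[OF Y phi] using Y by (simp add: adj_mult mult_assoc_dims)

text \<open>Operations on Bob's side: with \<open>M\<close> the coefficient matrix of \<open>\<psi>\<close>, the branches have
  reduced states \<open>M Y\<^sub>l M\<^sup>\<dagger>\<close> where \<open>\<Sum>\<^sub>l Y\<^sub>l = 1\<close>, so no twisting unitaries are needed.\<close>
lemma decomposition_bob:
  assumes psi: "\<psi> \<in> carrier_vec (dA * dB)"
    and B_dim: "\<And>l. l \<in> L \<Longrightarrow> B l \<in> carrier_mat dB dB"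
    and B_complete: "\<And>i j. i < dB \<Longrightarrow> j < dB \<Longrightarrow> (\<Sum>l\<in>L. (adj (B l) * B l) $$ (i,j)) = 1\<^sub>m dB $$ (i,j)"
    and W: "W \<in> carrier_mat dA dA"
  shows "tr (W * reduced dA dB \<psi>)
    = (\<Sum>l\<in>L. tr (1\<^sub>m dA * W * adj (1\<^sub>m dA) * reduced dA dB (tensor_id_left dA (B l) *\<^sub>v \<psi>)))"
proof -
  define M where "M = coef_mat dA dB \<psi>"
  define Y where "Y l = transpose_mat (B l) * adj (transpose_mat (B l))" for l
  have Yc: "Y l \<in> carrier_mat dB dB" if "l \<in> L" for l
    unfolding Y_def using B_dim[OF that] by auto
  have Y_one: "(\<Sum>l\<in>L. Y l $$ (c,e)) = 1\<^sub>m dB $$ (c,e)" if c: "c < dB" and e: "e < dB" for c e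
  proof -
    have "Y l $$ (c,e) = (adj (B l) * B l) $$ (e,c)" if "l \<in> L" for l
      unfolding Y_def using c e B_dim[OF that]
      by (simp add: mult_mat_index[of _ dB dB _ dB] mult.commute del: index_mult_mat(1))
    then show ?thesis using B_complete[OF e c] c e by (auto cong: sum.cong)
  qed
  have "tr (W * reduced dA dB \<psi>) = tr ((adj M * W * M) * 1\<^sub>m dB)"
    using tr_congruence[OF W coef_mat_carrier one_carrier_mat] unfolding M_def reduced_def by simp
  also have "\<dots> = (\<Sum>l\<in>L. tr ((adj M * W * M) * Y l))"
    using tr_resolution[OF _ Yc Y_one, of "adj M * W * M"] W unfolding M_def
    by (simp add: mult_carrier_mat[OF mult_carrier_mat[OF adj_carrier[OF coef_mat_carrier] W] coef_mat_carrier])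
  also have "\<dots> = (\<Sum>l\<in>L. tr (W * (M * Y l * adj M)))"
    using tr_congruence[OF W coef_mat_carrier Yc] unfolding M_def by simp
  finally show ?thesis
    using W psi B_dim unfolding M_def Y_def by (simp add: reduced_tensor_left)
qed

text \<open>Write \<open>\<rho>\<^sub>\<psi> = R\<^sup>2\<close> with \<open>R\<close> Hermitian (this needs \<open>d\<^sub>A \<le> d\<^sub>B\<close>) and
  \<open>C\<^sub>k = A\<^sub>k R\<close>.  Then \<open>tr (W \<rho>\<^sub>\<psi>) = \<Sum>\<^sub>k tr (W C\<^sub>k\<^sup>\<dagger> C\<^sub>k)\<close>, and \<open>C\<^sub>k\<^sup>\<dagger> C\<^sub>k\<close> is unitarily similar to
  \<open>C\<^sub>k C\<^sub>k\<^sup>\<dagger> = A\<^sub>k \<rho>\<^sub>\<psi> A\<^sub>k\<^sup>\<dagger>\<close>, the reduced state of the \<open>k\<close>-th branch.\<close>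
lemma decomposition_alice:
  assumes dims: "dA \<le> dB" and psi: "\<psi> \<in> carrier_vec (dA * dB)"
    and A_dim: "\<And>k. k \<in> K \<Longrightarrow> A k \<in> carrier_mat dA dA"
    and A_complete: "\<And>i j. i < dA \<Longrightarrow> j < dA \<Longrightarrow> (\<Sum>k\<in>K. (adj (A k) * A k) $$ (i,j)) = 1\<^sub>m dA $$ (i,j)"
  shows "\<exists>Q. (\<forall>k\<in>K. unitary_mat dA (Q k)) \<and> (\<forall>W\<in>carrier_mat dA dA. tr (W * reduced dA dB \<psi>)
    = (\<Sum>k\<in>K. tr (Q k * W * adj (Q k) * reduced dA dB (tensor_id_right dB (A k) *\<^sub>v \<psi>))))"
proof -
  obtain R where Rc: "R \<in> carrier_mat dA dA" and herm: "adj R = R" and rho: "reduced dA dB \<psi> = R * R"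
    using hermitian_square_root[OF coef_mat_carrier[of dA dB \<psi>] dims] unfolding reduced_def
    by (elim exE conjE)
  have "\<forall>k\<in>K. \<exists>Q. unitary_mat dA Q \<and> adj (A k * R) * (A k * R) = adj Q * ((A k * R) * adj (A k * R)) * Q"
  proof
    fix k assume "k \<in> K"
    show "\<exists>Q. unitary_mat dA Q \<and> adj (A k * R) * (A k * R) = adj Q * ((A k * R) * adj (A k * R)) * Q"
      by (rule gram_unitarily_similar[OF mult_carrier_mat[OF A_dim[OF \<open>k \<in> K\<close>] Rc]])
  qed
  then obtain Q where Q: "\<And>k. k \<in> K \<Longrightarrow> unitary_mat dA (Q k)"
    and sim: "\<And>k. k \<in> K \<Longrightarrow> adj (A k * R) * (A k * R) = adj (Q k) * ((A k * R) * adj (A k * R)) * Q k"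
    by (elim bchoice[THEN exE]) blast
  have branch: "tr (W * (R * (adj (A k) * A k) * adj R))
      = tr (Q k * W * adj (Q k) * reduced dA dB (tensor_id_right dB (A k) *\<^sub>v \<psi>))"
    if W: "W \<in> carrier_mat dA dA" and k: "k \<in> K" for W k
  proof -
    note carriers = A_dim[OF k] Rc unitary_carrier[OF Q[OF k]]
    have C: "A k * R \<in> carrier_mat dA dA" using mult_carrier_mat[OF A_dim[OF k] Rc] .
    have CC: "(A k * R) * adj (A k * R) \<in> carrier_mat dA dA" using mult_carrier_mat[OF C adj_carrier[OF C]] .
    have "R * (adj (A k) * A k) * adj R = adj (Q k) * ((A k * R) * adj (A k * R)) * adj (adj (Q k))"
      using sim[OF k] carriers herm by (simp add: adj_mult mult_assoc_dims)
    then have "tr (W * (R * (adj (A k) * A k) * adj R)) = tr ((Q k * W * adj (Q k)) * ((A k * R) * adj (A k * R)))"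
      using tr_congruence[OF W adj_carrier[OF unitary_carrier[OF Q[OF k]]] CC] by simp
    also have "(A k * R) * adj (A k * R) = reduced dA dB (tensor_id_right dB (A k) *\<^sub>v \<psi>)"
      using carriers herm rho by (simp add: reduced_tensor_right[OF A_dim[OF k] psi] adj_mult mult_assoc_dims)
    finally show ?thesis .
  qed
  have "tr (W * reduced dA dB \<psi>)
      = (\<Sum>k\<in>K. tr (Q k * W * adj (Q k) * reduced dA dB (tensor_id_right dB (A k) *\<^sub>v \<psi>)))"
    if W: "W \<in> carrier_mat dA dA" for W
  proof -
    have Z: "adj R * W * R \<in> carrier_mat dA dA" using W Rc by (simp add: mult_carrier_mat[of _ dA dA])
    have "tr (W * reduced dA dB \<psi>) = tr ((adj R * W * R) * 1\<^sub>m dA)"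
      using tr_congruence[OF W Rc one_carrier_mat] Rc herm rho by simp
    also have "\<dots> = (\<Sum>k\<in>K. tr ((adj R * W * R) * (adj (A k) * A k)))"
      using tr_resolution[OF Z mult_carrier_mat[OF adj_carrier[OF A_dim] A_dim] A_complete]
      by (simp add: right_mult_one_mat[OF Z])
    also have "\<dots> = (\<Sum>k\<in>K. tr (W * (R * (adj (A k) * A k) * adj R)))"
      using tr_congruence[OF W Rc mult_carrier_mat[OF adj_carrier[OF A_dim] A_dim]] by (intro sum.cong refl) simp
    finally show ?thesis using branch[OF W] by simp
  qed
  then show ?thesis using Q by (intro exI[of _ Q]) simp
qed

lemma monotone_alice:
  assumes dims: "dA \<le> dB" and spec: "is_spectrum dA \<Lambda>"
    and psi: "\<psi> \<in> carrier_vec (dA * dB)" "sqnorm \<psi> = 1" and finK: "finite K"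
    and A_dim: "\<And>k. k \<in> K \<Longrightarrow> A k \<in> carrier_mat dA dA"
    and A_complete: "\<And>i j. i < dA \<Longrightarrow> j < dA \<Longrightarrow> (\<Sum>k\<in>K. (adj (A k) * A k) $$ (i,j)) = 1\<^sub>m dA $$ (i,j)"
  defines "\<phi> k \<equiv> tensor_id_right dB (A k) *\<^sub>v \<psi>"
  shows "sqrt (F_fid dA dB \<Lambda> \<psi>)
      \<le> (\<Sum>k\<in>{k\<in>K. sqnorm (\<phi> k) > 0}. sqnorm (\<phi> k) * sqrt (F_fid dA dB \<Lambda> (normalized (\<phi> k))))
    \<and> (\<Sum>k\<in>{k\<in>K. sqnorm (\<phi> k) > 0}. sqnorm (\<phi> k) * E_ent dA dB \<Lambda> (normalized (\<phi> k)))
      \<le> E_ent dA dB \<Lambda> \<psi>"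
proof -
  obtain Q where "\<forall>k\<in>K. unitary_mat dA (Q k)" and "\<forall>W\<in>carrier_mat dA dA.
      tr (W * reduced dA dB \<psi>) = (\<Sum>k\<in>K. tr (Q k * W * adj (Q k) * reduced dA dB (\<phi> k)))"
    using decomposition_alice[of dA dB \<psi> K A] dims psi(1) A_dim A_complete unfolding \<phi>_def by auto
  then show ?thesis
    using mult_mat_vec_carrier[OF tensor_id_right_carrier[where dB=dB, OF A_dim] psi(1)]
    unfolding \<phi>_def by (intro monotone_under_decomposition[OF spec psi finK]) auto
qed

lemma monotone_bob:
  assumes spec: "is_spectrum dA \<Lambda>"
    and psi: "\<psi> \<in> carrier_vec (dA * dB)" "sqnorm \<psi> = 1" and finL: "finite L"
    and B_dim: "\<And>l. l \<in> L \<Longrightarrow> B l \<in> carrier_mat dB dB"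
    and B_complete: "\<And>i j. i < dB \<Longrightarrow> j < dB \<Longrightarrow> (\<Sum>l\<in>L. (adj (B l) * B l) $$ (i,j)) = 1\<^sub>m dB $$ (i,j)"
  defines "\<phi> l \<equiv> tensor_id_left dA (B l) *\<^sub>v \<psi>"
  shows "sqrt (F_fid dA dB \<Lambda> \<psi>)
      \<le> (\<Sum>l\<in>{l\<in>L. sqnorm (\<phi> l) > 0}. sqnorm (\<phi> l) * sqrt (F_fid dA dB \<Lambda> (normalized (\<phi> l))))
    \<and> (\<Sum>l\<in>{l\<in>L. sqnorm (\<phi> l) > 0}. sqnorm (\<phi> l) * E_ent dA dB \<Lambda> (normalized (\<phi> l)))
      \<le> E_ent dA dB \<Lambda> \<psi>"
  using decomposition_bob[of \<psi> dA dB L B] psi(1) B_dim B_complete unitary_one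
    mult_mat_vec_carrier[OF tensor_id_left_carrier[where dA=dA, OF B_dim] psi(1)]
  unfolding \<phi>_def by (intro monotone_under_decomposition[OF spec psi finL, where Q="\<lambda>_. 1\<^sub>m dA"]) auto

theorem theorem2:
  fixes dA dB :: nat and \<Lambda> :: "complex multiset" and \<psi> :: "complex vec"
    and K :: "'k set" and L :: "'l set"
    and A :: "'k \<Rightarrow> complex mat" and B :: "'l \<Rightarrow> complex mat"
  assumes dims: "1 \<le> dA" "dA \<le> dB"
    and spec: "is_spectrum dA \<Lambda>"
    and psi: "\<psi> \<in> carrier_vec (dA * dB)" "sqnorm \<psi> = 1"
    and finK: "finite K"
    and A_dim: "\<And>k. k \<in> K \<Longrightarrow> A k \<in> carrier_mat dA dA"
    and A_complete: "\<And>i j. i < dA \<Longrightarrow> j < dA \<Longrightarrow> (\<Sum>k\<in>K. (adj (A k) * A k) $$ (i,j)) = 1\<^sub>m dA $$ (i,j)"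
    and finL: "finite L"
    and B_dim: "\<And>l. l \<in> L \<Longrightarrow> B l \<in> carrier_mat dB dB"
    and B_complete: "\<And>i j. i < dB \<Longrightarrow> j < dB \<Longrightarrow> (\<Sum>l\<in>L. (adj (B l) * B l) $$ (i,j)) = 1\<^sub>m dB $$ (i,j)"
  shows
    "(let p = (\<lambda>k. sqnorm (tensor_id_right dB (A k) *\<^sub>v \<psi>));
         \<psi>' = (\<lambda>k. (1 / complex_of_real (sqrt (p k))) \<cdot>\<^sub>v (tensor_id_right dB (A k) *\<^sub>v \<psi>))
     in (\<Sum>k\<in>{k\<in>K. p k > 0}. p k * sqrt (F_fid dA dB \<Lambda> (\<psi>' k))) \<ge> sqrt (F_fid dA dB \<Lambda> \<psi>)
      \<and> (\<Sum>k\<in>{k\<in>K. p k > 0}. p k * E_ent dA dB \<Lambda> (\<psi>' k)) \<le> E_ent dA dB \<Lambda> \<psi>)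
   \<and> (let q = (\<lambda>l. sqnorm (tensor_id_left dA (B l) *\<^sub>v \<psi>));
         \<phi>' = (\<lambda>l. (1 / complex_of_real (sqrt (q l))) \<cdot>\<^sub>v (tensor_id_left dA (B l) *\<^sub>v \<psi>))
     in (\<Sum>l\<in>{l\<in>L. q l > 0}. q l * sqrt (F_fid dA dB \<Lambda> (\<phi>' l))) \<ge> sqrt (F_fid dA dB \<Lambda> \<psi>)
      \<and> (\<Sum>l\<in>{l\<in>L. q l > 0}. q l * E_ent dA dB \<Lambda> (\<phi>' l)) \<le> E_ent dA dB \<Lambda> \<psi>)"
  using monotone_alice[of dA dB \<Lambda> \<psi> K A] monotone_bob[of dA \<Lambda> \<psi> dB L B] assms
  unfolding Let_def normalized_def by simp

end
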